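(* Let $q\ge1$ and assume Hypothesis (H$_q$). Then for all $x\in[a,b]$ and $\lambda\in[0,1]$, $$\Big|(1-\lambda)f(mx)+\lambda\frac{(x-a)f(ma)+(b-x)f(mb)}{b-a}-\frac{1}{m(b-a)}\int_{ma}^{mb}f(t)\,dt\Big|\le\frac{mA_1(1,\lambda)^{1-\frac1q}}{b-a}\Big\{(x-a)^2\Big(|f'(mx)|^qA_2(\alpha,1,\lambda)+m|f'(a)|^qA_3(\alpha,1,\lambda)\Big)^{\frac1q}+(b-x)^2\Big(|f'(mx)|^qA_2(\alpha,1,\lambda)+m|f'(b)|^qA_3(\alpha,1,\lambda)\Big)^{\frac1q}\Big\}.$$
   Context: $(\alpha,m)$-convexity: for $(\alpha,m)\in[0,1]\times(0,1]$ and an interval $K\subseteq[0,\infty)$, a function $g:K\to\mathbb{R}$ is $(\alpha,m)$-convex on $K$ if $g(tX+m(1-t)Y)\le t^\alpha g(X)+m(1-t^\alpha)g(Y)$ for all $X,Y\in K$ and $t\in[0,1]$ with $tX+m(1-t)Y\in K$ (convention $0^0=1$). Hypothesis (H$_q$): $I\subseteq[0,\infty)$ is an interval, $f:I\to\mathbb{R}$ is differentiable on the interior $I^\circ$, $m\in(0,1]$, $\alpha\in[0,1]$, $a<b$ with $ma,b\in I^\circ$, $f'$ is Lebesgue integrable on $[ma,mb]$, and $|f'|^q$ is $(\alpha,m)$-convex on $[ma,b]$. Constants: $A_1(\theta,\lambda)=\frac{2\theta\lambda^{1+\frac1\theta}+1}{\theta+1}-\lambda$, $A_2(\alpha,\theta,\lambda)=\frac{2\theta\lambda^{1+\frac{1+\alpha}{\theta}}}{(\alpha+1)(\alpha+\theta+1)}+\frac{1}{\alpha+\theta+1}-\frac{\lambda}{\alpha+1}$,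 $A_3(\alpha,\theta,\lambda)=A_1(\theta,\lambda)-A_2(\alpha,\theta,\lambda)$. *)

theory Defs
  imports "HOL-Analysis.Analysis"
begin

text \<open>Real power with the convention 0^0 = 1 (Isabelle's powr has 0 powr 0 = 0).\<close>
definition pow0 :: "real \<Rightarrow> real \<Rightarrow> real" where
  "pow0 t s = (if t = 0 \<and> s = 0 then 1 else t powr s)"

definition alpha_m_convex_on :: "real \<Rightarrow> real \<Rightarrow> real set \<Rightarrow> (real \<Rightarrow> real) \<Rightarrow> bool" where
  "alpha_m_convex_on \<alpha> m K g \<longleftrightarrow>
     (\<forall>X\<in>K. \<forall>Y\<in>K. \<forall>t\<in>{0..1}. t * X + m * (1 - t) * Y \<in> K \<longrightarrow>
        g (t * X + m * (1 - t) * Y) \<le> pow0 t \<alpha> * g X + m * (1 - pow0 t \<alpha>) * g Y)"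

definition A1 :: "real \<Rightarrow> real \<Rightarrow> real" where
  "A1 \<theta> l = (2 * \<theta> * l powr (1 + 1 / \<theta>) + 1) / (\<theta> + 1) - l"

definition A2 :: "real \<Rightarrow> real \<Rightarrow> real \<Rightarrow> real" where
  "A2 \<alpha> \<theta> l = 2 * \<theta> * l powr (1 + (1 + \<alpha>) / \<theta>) / ((\<alpha> + 1) * (\<alpha> + \<theta> + 1))
      + 1 / (\<alpha> + \<theta> + 1) - l / (\<alpha> + 1)"

definition A3 :: "real \<Rightarrow> real \<Rightarrow> real \<Rightarrow> real" where
  "A3 \<alpha> \<theta> l = A1 \<theta> l - A2 \<alpha> \<theta> l"

end

(*
  Splitting [ma, mb] at mx and substituting y = t mx + (1 - t) mY, integration by parts
  writes m (b - a) times the left-hand side as D(a) - D(b), where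
  D(Y) = (mx - mY)^2 * integral_0^1 (t - lam) f'(t mx + m (1 - t) Y) dt.
  By (alpha,m)-convexity, |f'| at that point is at most
  (t^alpha |f'(mx)|^q + m (1 - t^alpha) |f'(Y)|^q)^(1/q).  Jensen's inequality for the
  concave map s -> s^(1/q) with respect to the weight |t - lam|, whose mass is A1(1,lam),
  then gives the bound; A2 and A3 are the moments of t^alpha and 1 - t^alpha for that weight.
*)

theory Submission
  imports Defs
begin

lemma pow0_eq_powr: "t \<noteq> 0 \<or> s \<noteq> 0 \<Longrightarrow> pow0 t s = t powr s"
  by (auto simp: pow0_def)

lemma pow0_zero_right [simp]: "pow0 t 0 = 1"
  by (simp add: pow0_def)

lemma pow0_bounds:
  assumes "0 \<le> s" "t \<in> {0..1}"
  shows "0 \<le> pow0 t s" "pow0 t s \<le> 1"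
  using assms powr_mono2[of s t 1] by (auto simp: pow0_def)

lemma continuous_on_pow0:
  assumes "0 \<le> s"
  shows "continuous_on {0..} (\<lambda>t. pow0 t s)"
proof (cases "s = 0")
  case False
  then have "continuous_on {0..} (\<lambda>t::real. t powr s)"
    using assms by (intro continuous_on_powr' continuous_intros) auto
  then show ?thesis
    using False by (simp add: pow0_eq_powr)
qed simp

lemma has_integral_diff_mult_pow0:
  fixes s l u v :: real
  assumes "0 \<le> s" "0 \<le> u" "u \<le> v"
  defines "G \<equiv> \<lambda>t. t powr (s + 2) / (s + 2) - l * t powr (s + 1) / (s + 1)"
  shows "((\<lambda>t. (t - l) * pow0 t s) has_integral G v - G u) {u..v}"
proof (rule fundamental_theorem_of_calculus_interior)
  show "continuous_on {u..v} G"
    unfolding G_def using assms by (intro continuous_intros continuous_on_powr') auto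
  fix t assume "t \<in> {u<..<v}"
  then have t: "0 < t" using assms by auto
  have "(G has_real_derivative (s + 2) * t powr (s + 2 - 1) / (s + 2) - l * ((s + 1) * t powr (s + 1 - 1)) / (s + 1)) (at t)"
    unfolding G_def using t assms by (intro derivative_eq_intros has_real_derivative_powr) auto
  moreover have "(s + 2) * t powr (s + 2 - 1) / (s + 2) - l * ((s + 1) * t powr (s + 1 - 1)) / (s + 1)
      = t powr (s + 1) - l * t powr s"
    using assms by (simp add: add_ac)
  moreover have "\<dots> = (t - l) * pow0 t s"
    using t by (simp add: pow0_eq_powr powr_add algebra_simps)
  ultimately show "(G has_vector_derivative (t - l) * pow0 t s) (at t)"
    by (simp add: has_real_derivative_iff_has_vector_derivative)
qed (use assms in auto)

lemma has_integral_abs_diff_mult_pow0: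
  fixes s l :: real
  assumes "0 \<le> s" "0 \<le> l" "l \<le> 1"
  shows "((\<lambda>t. \<bar>t - l\<bar> * pow0 t s) has_integral A2 s 1 l) {0..1}"
proof -
  define G where "G t = t powr (s + 2) / (s + 2) - l * t powr (s + 1) / (s + 1)" for t
  have "((\<lambda>t. -((t - l) * pow0 t s)) has_integral -(G l - G 0)) {0..l}"
    using has_integral_diff_mult_pow0[of s 0 l l] assms unfolding G_def
    by (intro has_integral_neg) auto
  then have left: "((\<lambda>t. \<bar>t - l\<bar> * pow0 t s) has_integral G 0 - G l) {0..l}"
    by (subst has_integral_cong[where g = "\<lambda>t. -((t - l) * pow0 t s)"]) (auto simp: algebra_simps)
  have "((\<lambda>t. (t - l) * pow0 t s) has_integral G 1 - G l) {l..1}"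
    using has_integral_diff_mult_pow0[of s l 1 l] assms unfolding G_def by auto
  then have right: "((\<lambda>t. \<bar>t - l\<bar> * pow0 t s) has_integral G 1 - G l) {l..1}"
    by (subst has_integral_cong[where g = "\<lambda>t. (t - l) * pow0 t s"]) auto
  have "l * l powr (s + 1) = l powr (s + 2)"
    using assms by (cases "l = 0") (simp_all add: powr_add power2_eq_square)
  then have "G 0 - G l + (G 1 - G l)
      = 2 * (l powr (s + 2) / (s + 1) - l powr (s + 2) / (s + 2)) + 1 / (s + 2) - l / (s + 1)"
    using assms unfolding G_def by simp
  also have "\<dots> = A2 s 1 l"
    using assms unfolding A2_def by (simp add: field_simps add_ac)
  finally have "G 0 - G l + (G 1 - G l) = A2 s 1 l" .
  then show ?thesis
    using has_integral_combine[OF assms(2,3) left right] by simp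
qed

lemma A2_zero_left: "A2 0 1 l = A1 1 l"
  unfolding A1_def A2_def by (simp add: add_divide_distrib)

lemma has_integral_abs_diff:
  fixes l :: real
  assumes "0 \<le> l" "l \<le> 1"
  shows "((\<lambda>t. \<bar>t - l\<bar>) has_integral A1 1 l) {0..1}"
  using has_integral_abs_diff_mult_pow0[of 0 l] assms by (simp add: A2_zero_left)

lemma A1_pos:
  fixes l :: real
  assumes "0 \<le> l"
  shows "0 < A1 1 l"
proof -
  have "A1 1 l = (l - 1/2)^2 + 1/4"
    using assms unfolding A1_def by (simp add: powr_add power2_eq_square algebra_simps)
  then show ?thesis
    by (metis add_nonneg_pos zero_le_power2 zero_less_divide_1_iff zero_less_numeral)
qed

lemma powr_le_tangent:
  fixes s c r :: real
  assumes "0 \<le> s" "0 < c" "0 < r" "r \<le> 1"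
  shows "s powr r \<le> c powr (r - 1) * (r * s + (1 - r) * c)"
proof (cases "s = 0")
  case False
  have "s powr r = s powr r * (c powr (r - 1) * c powr (1 - r))"
    using assms by (simp flip: powr_add)
  also have "\<dots> = c powr (r - 1) * (s powr r * c powr (1 - r))"
    by (simp only: mult_ac)
  also have "\<dots> \<le> c powr (r - 1) * (r * s + (1 - r) * c)"
    using Youngs_inequality_0[of r "1 - r" s c] False assms by (intro mult_left_mono) auto
  finally show ?thesis .
qed (use assms in auto)

lemma integral_weighted_powr_le:
  fixes w h :: "'a::euclidean_space \<Rightarrow> real"
  assumes w: "(w has_integral W) S" and wh: "((\<lambda>t. w t * h t) has_integral P) S"
    and int: "(\<lambda>t. w t * h t powr r) integrable_on S"
    and nonneg: "\<And>t. t \<in> S \<Longrightarrow> 0 \<le> w t" "\<And>t. t \<in> S \<Longrightarrow> 0 \<le> h t"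
    and r: "0 < r" "r \<le> 1" and W: "0 < W"
  shows "integral S (\<lambda>t. w t * h t powr r) \<le> W powr (1 - r) * P powr r"
proof -
  have P: "0 \<le> P"
    using has_integral_nonneg[OF wh] nonneg by auto
  have tangent: "integral S (\<lambda>t. w t * h t powr r) \<le> c powr (r - 1) * (r * P + (1 - r) * c * W)"
    if c: "0 < c" for c
  proof (rule has_integral_le[OF integrable_integral[OF int]])
    show "((\<lambda>t. c powr (r - 1) * (r * (w t * h t) + (1 - r) * c * w t)) has_integral
        c powr (r - 1) * (r * P + (1 - r) * c * W)) S"
      by (intro has_integral_mult_right has_integral_add wh w)
    fix t assume t: "t \<in> S"
    have "w t * h t powr r \<le> w t * (c powr (r - 1) * (r * h t + (1 - r) * c))"
      using powr_le_tangent[of "h t" c r] nonneg[OF t] c r by (intro mult_left_mono) auto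
    then show "w t * h t powr r \<le> c powr (r - 1) * (r * (w t * h t) + (1 - r) * c * w t)"
      by (simp add: algebra_simps)
  qed
  show ?thesis
  proof (cases "P = 0")
    case False
    have "(P / W) powr (r - 1) * (r * P + (1 - r) * (P / W) * W) = (P / W) powr (r - 1) * P"
      using W by (simp add: field_simps)
    also have "\<dots> = W powr (1 - r) * P powr r"
      using P False W by (simp add: powr_diff powr_divide field_simps)
    finally show ?thesis
      using tangent[of "P / W"] P False W by simp
  next
    case True
    \<comment> \<open>the optimal tangent point \<open>P / W\<close> degenerates, so let \<open>c\<close> tend to \<open>0\<close> instead\<close>
    show ?thesis
    proof (rule field_le_epsilon)
      fix e :: real assume e: "0 < e"
      define c where "c = (e / W) powr (1 / r)"
      have c: "0 < c" "c powr r = e / W"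
        using e W r by (simp_all add: c_def powr_powr)
      then have "c powr (r - 1) * c = e / W"
        by (simp add: powr_diff)
      then have "c powr (r - 1) * (r * P + (1 - r) * c * W) = (1 - r) * e"
        using True W by (simp add: field_simps)
      then have "integral S (\<lambda>t. w t * h t powr r) \<le> (1 - r) * e"
        using tangent[OF c(1)] by simp
      also have "\<dots> \<le> e"
        using e r by (simp add: algebra_simps)
      finally show "integral S (\<lambda>t. w t * h t powr r) \<le> W powr (1 - r) * P powr r + e"
        using True by simp
    qed
  qed
qed

lemma integral_abs_diff_mult_alpha_m_bound_le:
  fixes A B m \<alpha> l q :: real
  assumes AB: "0 \<le> A" "0 \<le> B" and m: "0 < m" and \<alpha>: "0 \<le> \<alpha>"
    and l: "0 \<le> l" "l \<le> 1" and q: "1 \<le> q"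
  defines "h \<equiv> \<lambda>t. pow0 t \<alpha> * A + m * (1 - pow0 t \<alpha>) * B"
  shows "(\<lambda>t. \<bar>t - l\<bar> * h t powr (1 / q)) integrable_on {0..1}"
    and "integral {0..1} (\<lambda>t. \<bar>t - l\<bar> * h t powr (1 / q))
           \<le> A1 1 l powr (1 - 1 / q) * (A * A2 \<alpha> 1 l + m * B * A3 \<alpha> 1 l) powr (1 / q)"
proof -
  have h_nonneg: "0 \<le> h t" if "t \<in> {0..1}" for t
    using pow0_bounds[OF \<alpha> that] AB m unfolding h_def by (simp add: add_nonneg_nonneg)
  have "continuous_on {0..1} h"
    unfolding h_def
    by (intro continuous_intros continuous_on_subset[OF continuous_on_pow0[OF \<alpha>]]) auto
  then have "continuous_on {0..1} (\<lambda>t. \<bar>t - l\<bar> * h t powr (1 / q))"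
    using h_nonneg q by (intro continuous_intros continuous_on_powr') auto
  then show int: "(\<lambda>t. \<bar>t - l\<bar> * h t powr (1 / q)) integrable_on {0..1}"
    by (rule integrable_continuous_interval)
  have "((\<lambda>t. A * (\<bar>t - l\<bar> * pow0 t \<alpha>) + m * B * (\<bar>t - l\<bar> - \<bar>t - l\<bar> * pow0 t \<alpha>)) has_integral
      A * A2 \<alpha> 1 l + m * B * (A1 1 l - A2 \<alpha> 1 l)) {0..1}"
    using has_integral_abs_diff[OF l] has_integral_abs_diff_mult_pow0[OF \<alpha> l]
    by (intro has_integral_add has_integral_mult_right has_integral_diff)
  then have "((\<lambda>t. \<bar>t - l\<bar> * h t) has_integral A * A2 \<alpha> 1 l + m * B * A3 \<alpha> 1 l) {0..1}"
    unfolding A3_def h_def by (simp add: algebra_simps)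
  then show "integral {0..1} (\<lambda>t. \<bar>t - l\<bar> * h t powr (1 / q))
      \<le> A1 1 l powr (1 - 1 / q) * (A * A2 \<alpha> 1 l + m * B * A3 \<alpha> 1 l) powr (1 / q)"
    using integral_weighted_powr_le[OF has_integral_abs_diff[OF l] _ int] h_nonneg q A1_pos[OF l(1)]
    by auto
qed

lemma has_integral_segment_trapezoid_identity:
  fixes f f' F :: "real \<Rightarrow> real" and X Z l :: real
  assumes f': "\<And>y. y \<in> closed_segment Z X \<Longrightarrow> (f has_real_derivative f' y) (at y)"
    and F: "\<And>y. y \<in> closed_segment Z X \<Longrightarrow>
      (F has_real_derivative f y) (at y within closed_segment Z X)"
  shows "((\<lambda>t. (X - Z)^2 * ((t - l) * f' (t * X + (1 - t) * Z))) has_integral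
           (X - Z) * ((1 - l) * f X + l * f Z) - (F X - F Z)) {0..1}"
proof -
  define g where "g t = t * X + (1 - t) * Z" for t
  have "g t \<in> closed_segment Z X" if "t \<in> {0..1}" for t
    unfolding g_def in_segment(1) using that by (intro exI[of _ t]) (auto simp: algebra_simps)
  then have g_segment: "g ` {0..1} \<subseteq> closed_segment Z X"
    by blast
  have g': "(g has_real_derivative X - Z) (at t within {0..1})" for t
    unfolding g_def by (auto intro!: derivative_eq_intros)
  define \<Phi> where "\<Phi> t = (X - Z) * (t - l) * f (g t) - F (g t)" for t
  have "(\<Phi> has_real_derivative (X - Z)^2 * ((t - l) * f' (g t))) (at t within {0..1})"
    if t: "t \<in> {0..1}" for t
  proof -
    have gt: "g t \<in> closed_segment Z X"
      using g_segment t by blast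
    have "((\<lambda>t. f (g t)) has_real_derivative f' (g t) * (X - Z)) (at t within {0..1})"
      by (rule DERIV_chain2[OF f'[OF gt] g'])
    moreover have "((\<lambda>t. F (g t)) has_real_derivative f (g t) * (X - Z)) (at t within {0..1})"
      using DERIV_image_chain[OF DERIV_subset[OF F[OF gt] g_segment] g'] by (simp add: comp_def)
    ultimately show ?thesis
      unfolding \<Phi>_def
      by (auto intro!: derivative_eq_intros simp: power2_eq_square algebra_simps)
  qed
  then have "((\<lambda>t. (X - Z)^2 * ((t - l) * f' (g t))) has_integral \<Phi> 1 - \<Phi> 0) {0..1}"
    by (intro fundamental_theorem_of_calculus)
       (auto simp: has_real_derivative_iff_has_vector_derivative)
  moreover have "\<Phi> 1 - \<Phi> 0 = (X - Z) * ((1 - l) * f X + l * f Z) - (F X - F Z)"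
    unfolding \<Phi>_def g_def by (simp add: algebra_simps)
  ultimately show ?thesis
    unfolding g_def by simp
qed

lemma alpha_m_convex_segment_estimate:
  fixes f f' F :: "real \<Rightarrow> real" and K :: "real set"
  assumes q: "1 \<le> q" and m: "0 < m" and \<alpha>: "0 \<le> \<alpha>" and l: "0 \<le> l" "l \<le> 1"
    and f': "\<And>y. y \<in> closed_segment (m * Y) X \<Longrightarrow> (f has_real_derivative f' y) (at y)"
    and F: "\<And>y. y \<in> closed_segment (m * Y) X \<Longrightarrow>
      (F has_real_derivative f y) (at y within closed_segment (m * Y) X)"
    and conv: "alpha_m_convex_on \<alpha> m K (\<lambda>y. \<bar>f' y\<bar> powr q)"
    and K: "X \<in> K" "Y \<in> K" "closed_segment (m * Y) X \<subseteq> K"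
  shows "\<bar>(X - m * Y) * ((1 - l) * f X + l * f (m * Y)) - (F X - F (m * Y))\<bar>
    \<le> (X - m * Y)^2 * (A1 1 l powr (1 - 1 / q) *
        (\<bar>f' X\<bar> powr q * A2 \<alpha> 1 l + m * \<bar>f' Y\<bar> powr q * A3 \<alpha> 1 l) powr (1 / q))"
proof -
  define A where "A = \<bar>f' X\<bar> powr q"
  define B where "B = \<bar>f' Y\<bar> powr q"
  define h where "h t = pow0 t \<alpha> * A + m * (1 - pow0 t \<alpha>) * B" for t
  have bound: "\<bar>t - l\<bar> * \<bar>f' (t * X + (1 - t) * (m * Y))\<bar> \<le> \<bar>t - l\<bar> * h t powr (1 / q)"
    if t: "t \<in> {0..1}" for t
  proof -
    have "t * X + (1 - t) * (m * Y) \<in> closed_segment (m * Y) X"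
      unfolding in_segment(1) using t by (intro exI[of _ t]) (auto simp: algebra_simps)
    then have "t * X + m * (1 - t) * Y \<in> K"
      using K(3) by (auto simp: algebra_simps)
    then have "\<bar>f' (t * X + m * (1 - t) * Y)\<bar> powr q \<le> h t"
      using conv K(1,2) t unfolding alpha_m_convex_on_def h_def A_def B_def by blast
    then have "(\<bar>f' (t * X + m * (1 - t) * Y)\<bar> powr q) powr (1 / q) \<le> h t powr (1 / q)"
      using q by (intro powr_mono2) auto
    then have "\<bar>f' (t * X + (1 - t) * (m * Y))\<bar> \<le> h t powr (1 / q)"
      using q by (simp add: powr_powr mult.assoc mult.left_commute)
    then show ?thesis
      by (simp add: mult_left_mono)
  qed
  have "0 \<le> A" "0 \<le> B"
    by (simp_all add: A_def B_def)
  note h_integral = integral_abs_diff_mult_alpha_m_bound_le[OF this m \<alpha> l q, folded h_def]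
  have identity: "((\<lambda>t. (X - m * Y)^2 * ((t - l) * f' (t * X + (1 - t) * (m * Y)))) has_integral
      (X - m * Y) * ((1 - l) * f X + l * f (m * Y)) - (F X - F (m * Y))) {0..1}"
    using has_integral_segment_trapezoid_identity[of "m * Y" X f f' F l] f' F closed_segment_commute
    by metis
  have "\<bar>(X - m * Y) * ((1 - l) * f X + l * f (m * Y)) - (F X - F (m * Y))\<bar>
      = norm (integral {0..1} (\<lambda>t. (X - m * Y)^2 * ((t - l) * f' (t * X + (1 - t) * (m * Y)))))"
    using integral_unique[OF identity] by simp
  also have "\<dots> \<le> integral {0..1} (\<lambda>t. (X - m * Y)^2 * (\<bar>t - l\<bar> * h t powr (1 / q)))"
  proof (rule integral_norm_bound_integral)
    show "(\<lambda>t. (X - m * Y)^2 * (\<bar>t - l\<bar> * h t powr (1 / q))) integrable_on {0..1}"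
      using h_integral(1) by (rule integrable_on_mult_right)
  qed (use identity bound in \<open>auto simp: abs_mult mult_left_mono\<close>)
  also have "\<dots> \<le> (X - m * Y)^2 * (A1 1 l powr (1 - 1 / q) * (A * A2 \<alpha> 1 l + m * B * A3 \<alpha> 1 l) powr (1 / q))"
    using h_integral(2) by (simp add: mult_left_mono)
  finally show ?thesis
    unfolding A_def B_def .
qed

theorem alpha_m_convex_trapezoid_ostrowski_inequality:
  fixes f f' :: "real \<Rightarrow> real" and m \<alpha> q a b x l :: real
  assumes q: "1 \<le> q" and m: "0 < m" "m \<le> 1" and \<alpha>: "0 \<le> \<alpha>"
    and ab: "0 \<le> a" "a < b" and x: "x \<in> {a..b}" and l: "l \<in> {0..1}"
    and f': "\<And>y. y \<in> {m * a..b} \<Longrightarrow> (f has_real_derivative f' y) (at y)"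
    and conv: "alpha_m_convex_on \<alpha> m {m * a..b} (\<lambda>y. \<bar>f' y\<bar> powr q)"
  shows "\<bar>(1 - l) * f (m * x) + l * ((x - a) * f (m * a) + (b - x) * f (m * b)) / (b - a)
            - 1 / (m * (b - a)) * integral {m * a..m * b} f\<bar>
         \<le> m * A1 1 l powr (1 - 1 / q) / (b - a) *
            ((x - a)^2 * (\<bar>f' (m * x)\<bar> powr q * A2 \<alpha> 1 l
                           + m * \<bar>f' a\<bar> powr q * A3 \<alpha> 1 l) powr (1 / q)
           + (b - x)^2 * (\<bar>f' (m * x)\<bar> powr q * A2 \<alpha> 1 l
                           + m * \<bar>f' b\<bar> powr q * A3 \<alpha> 1 l) powr (1 / q))"
proof -
  have order: "m * a \<le> a" "m * a \<le> m * x" "m * x \<le> m * b" "m * b \<le> b"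
    using ab x m by (auto simp: mult_left_le_one_le)
  define F where "F u = integral {m * a..u} f" for u
  have "continuous_on {m * a..m * b} f"
    using f' order by (meson DERIV_isCont atLeastAtMost_iff continuous_at_imp_continuous_on order_trans)
  then have F': "(F has_real_derivative f y) (at y within {m * a..m * b})" if "y \<in> {m * a..m * b}" for y
    unfolding F_def using that by (rule integral_has_real_derivative)
  define R where "R = A1 1 l powr (1 - 1 / q)"
  define C where "C Y = (\<bar>f' (m * x)\<bar> powr q * A2 \<alpha> 1 l + m * \<bar>f' Y\<bar> powr q * A3 \<alpha> 1 l) powr (1 / q)"
    for Y
  define D where "D Y = (m * x - m * Y) * ((1 - l) * f (m * x) + l * f (m * Y)) - (F (m * x) - F (m * Y))"
    for Y
  have D_le: "\<bar>D Y\<bar> \<le> (m * x - m * Y)^2 * (R * C Y)" if "Y \<in> {a, b}" for Y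
  proof -
    have segment: "closed_segment (m * Y) (m * x) \<subseteq> {m * a..m * b}"
      using that order by (auto simp: closed_segment_eq_real_ivl)
    show ?thesis
      unfolding D_def R_def C_def
    proof (rule alpha_m_convex_segment_estimate[OF q m(1) \<alpha> _ _ _ _ conv])
      fix y assume "y \<in> closed_segment (m * Y) (m * x)"
      then have y: "y \<in> {m * a..m * b}"
        using segment by blast
      then show "(f has_real_derivative f' y) (at y)"
        using f' order by auto
      show "(F has_real_derivative f y) (at y within closed_segment (m * Y) (m * x))"
        using DERIV_subset[OF F'[OF y] segment] .
    qed (use that order x l segment in auto)
  qed
  have "(1 - l) * f (m * x) + l * ((x - a) * f (m * a) + (b - x) * f (m * b)) / (b - a)
      - 1 / (m * (b - a)) * integral {m * a..m * b} f = (D a - D b) / (m * (b - a))"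
  proof -
    \<comment> \<open>\<open>F (m * a) = 0\<close>, so the antiderivative terms telescope to the integral over \<open>{m * a..m * b}\<close>\<close>
    have "D a - D b = m * (b - a) * (1 - l) * f (m * x)
        + m * l * ((x - a) * f (m * a) + (b - x) * f (m * b)) - integral {m * a..m * b} f"
      by (simp add: D_def F_def algebra_simps)
    then show ?thesis
      using m ab by (simp add: diff_divide_distrib add_divide_distrib)
  qed
  also have "\<bar>\<dots>\<bar> \<le> (\<bar>D a\<bar> + \<bar>D b\<bar>) / (m * (b - a))"
    using m ab by (simp add: abs_divide divide_right_mono)
  also have "\<dots> \<le> ((m * x - m * a)^2 * (R * C a) + (m * x - m * b)^2 * (R * C b)) / (m * (b - a))"
    using m ab D_le by (intro divide_right_mono add_mono) auto
  also have "\<dots> = m * R / (b - a) * ((x - a)^2 * C a + (b - x)^2 * C b)"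
    using m ab by (simp add: power2_eq_square field_simps)
  finally show ?thesis
    unfolding R_def C_def .
qed

theorem mainTheorem3:
  fixes f :: "real \<Rightarrow> real" and I :: "real set"
    and m \<alpha> q a b x lam :: real
  assumes q: "q \<ge> 1"
    and I: "is_interval I" "I \<subseteq> {0..}"
    and diff: "\<And>y. y \<in> interior I \<Longrightarrow> f differentiable (at y)"
    and m: "0 < m" "m \<le> 1"
    and \<alpha>: "0 \<le> \<alpha>" "\<alpha> \<le> 1"
    and ab: "a < b" "m * a \<in> interior I" "b \<in> interior I"
    and int: "set_integrable lborel {m * a..m * b} (deriv f)"
    and conv: "alpha_m_convex_on \<alpha> m {m * a..b} (\<lambda>y. \<bar>deriv f y\<bar> powr q)"
    and x: "x \<in> {a..b}"
    and hlam: "lam \<in> {0..1}"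
  shows "\<bar>(1 - lam) * f (m * x) + lam * ((x - a) * f (m * a) + (b - x) * f (m * b)) / (b - a)
            - 1 / (m * (b - a)) * integral {m * a..m * b} f\<bar>
         \<le> m * A1 1 lam powr (1 - 1 / q) / (b - a) *
            ((x - a)^2 * (\<bar>deriv f (m * x)\<bar> powr q * A2 \<alpha> 1 lam
                           + m * \<bar>deriv f a\<bar> powr q * A3 \<alpha> 1 lam) powr (1 / q)
           + (b - x)^2 * (\<bar>deriv f (m * x)\<bar> powr q * A2 \<alpha> 1 lam
                           + m * \<bar>deriv f b\<bar> powr q * A3 \<alpha> 1 lam) powr (1 / q))"
proof -
  have "0 \<le> m * a"
    using ab(2) I(2) interior_subset by blast
  then have "0 \<le> a"
    using m by (simp add: zero_le_mult_iff)
  have "is_interval (interior I)"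
    using I(1) by (simp add: is_interval_convex_1 convex_interior)
  then have "y \<in> interior I" if "y \<in> {m * a..b}" for y
    using that unfolding is_interval_1 by (meson ab(2,3) atLeastAtMost_iff)
  then have "(f has_real_derivative deriv f y) (at y)" if "y \<in> {m * a..b}" for y
    using that diff DERIV_deriv_iff_real_differentiable by blast
  then show ?thesis
    by (rule alpha_m_convex_trapezoid_ostrowski_inequality[OF q m \<alpha>(1) \<open>0 \<le> a\<close> ab(1) x hlam _ conv])
qed

end
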